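(* Let $\Omega\subset\mathbb{R}^3$ be open, let $x\in\Omega$ and $0<r<\operatorname{dist}(x,\partial\Omega)$. Let $u\in C^2(\Omega)^3$ satisfy $\nabla\cdot u=0$ in $\Omega$, let $v\in\mathbb{R}^3$ be a constant vector, and let $p$ be a (classical) solution of $$-\Delta p=\nabla\cdot(u\cdot\nabla u)=\sum_{i,j=1}^3\partial_i\partial_j(u_iu_j)\quad\text{in }\Omega.$$ Then $$\partial_r\Big\{\overline{p}(x,r)+\fint_{|\xi|=1}\big|\xi\cdot(u(x+r\xi)-v)\big|^2\,dS(\xi)\Big\}=-\frac1r\fint_{|\xi|=1}\Big[3\big|\xi\cdot(u(x+r\xi)-v)\big|^2-\big|u(x+r\xi)-v\big|^2\Big]dS(\xi).$$
   Context: For a function $f$, $\overline{f}(x,r)=\frac{1}{4\pi r^2}\int_{|x-y|=r}f(y)\,dS(y)=\fint_{|\xi|=1}f(x+r\xi)\,dS(\xi)$ denotes the spherical average, where $\fint$ denotes the normalized integral (integral divided by the area of the unit sphere $\mathbb{S}^2$). *)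

theory Defs
  imports "HOL-Analysis.Analysis"
begin

definition partial :: "3 \<Rightarrow> (real^3 \<Rightarrow> real) \<Rightarrow> real^3 \<Rightarrow> real" where
  "partial i f y = deriv (\<lambda>t. f (y + t *\<^sub>R axis i 1)) 0"

definition C2_on :: "(real^3) set \<Rightarrow> (real^3 \<Rightarrow> real) \<Rightarrow> bool" where
  "C2_on S f \<longleftrightarrow> (\<forall>y\<in>S. f differentiable (at y))
     \<and> (\<forall>i. \<forall>y\<in>S. partial i f differentiable (at y))
     \<and> (\<forall>i j. continuous_on S (partial j (partial i f)))"

definition laplacian :: "(real^3 \<Rightarrow> real) \<Rightarrow> real^3 \<Rightarrow> real" where
  "laplacian f y = (\<Sum>i\<in>UNIV. partial i (partial i f) y)"

definition sph :: "real \<Rightarrow> real \<Rightarrow> real^3" where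
  "sph \<theta> \<phi> = vector [sin \<theta> * cos \<phi>, sin \<theta> * sin \<phi>, cos \<theta>]"

text \<open>Normalized surface integral over S^2 (surface measure in spherical coordinates,
  dS = sin theta dtheta dphi, divided by the area 4 pi).\<close>
definition sphere_avg :: "(real^3 \<Rightarrow> real) \<Rightarrow> real" where
  "sphere_avg g = (1 / (4 * pi)) *
     (LBINT \<phi>=0..2*pi. (LBINT \<theta>=0..pi. g (sph \<theta> \<phi>) * sin \<theta>))"

end

theory Submission
  imports Defs
begin

text \<open>Differentiating under the integral sign, the derivative of the left-hand side is the
  spherical mean of \<xi> \<bullet> \<nabla>p + 2 (\<xi> \<bullet> w) (\<xi> \<bullet> (\<xi> \<bullet> \<nabla>) u), where w = u - v. The pressure equation
  together with \<nabla> \<bullet> u = 0 says that \<nabla>p + (u \<bullet> \<nabla>) u is divergence free, so by the divergence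
  theorem, in the form d/dt (t^2 mean(\<xi> \<bullet> Z(x + t \<xi>))) = t^2 mean(\<nabla> \<bullet> Z), its flux through every
  sphere about x vanishes; this replaces \<xi> \<bullet> \<nabla>p by - \<xi> \<bullet> (u \<bullet> \<nabla>) u. The remaining terms are
  handled by the divergence theorem on the sphere itself,
  r^2 mean(\<nabla> \<bullet> Z - \<xi> \<bullet> (DZ) \<xi>) = 2 r mean(\<xi> \<bullet> Z), applied to
  Z(y) = ((y - x) \<bullet> w) u - ((y - x) \<bullet> v) w, whose normal component on the sphere is r (\<xi> \<bullet> w)^2.
  In spherical coordinates both divergence identities reduce to the fundamental theorem of
  calculus in \<theta> and in \<phi>.\<close>

section \<open>Gradients in coordinates\<close>

definition has_grad :: "(real^3 \<Rightarrow> real) \<Rightarrow> (3 \<Rightarrow> real) \<Rightarrow> real^3 \<Rightarrow> bool" where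
  "has_grad f P y \<longleftrightarrow> (f has_derivative (\<lambda>h. \<Sum>i\<in>UNIV. h$i * P i)) (at y)"

lemma has_grad_eq_rhs: "has_grad f P y \<Longrightarrow> (\<And>i. P i = Q i) \<Longrightarrow> has_grad f Q y"
  unfolding has_grad_def by simp

lemma has_grad_const: "has_grad (\<lambda>z. c) (\<lambda>i. 0) y"
  unfolding has_grad_def by simp

lemma has_grad_component: "has_grad (\<lambda>z. z$k) (\<lambda>i. if i = k then 1 else 0) y"
proof -
  have "((\<lambda>z::real^3. z$k) has_derivative (\<lambda>h. h$k)) (at y)"
    by (rule bounded_linear_imp_has_derivative) (rule bounded_linear_vec_nth)
  then show ?thesis
    unfolding has_grad_def by (simp add: if_distrib[of "\<lambda>c. _ * c"] cong: if_cong)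
qed

lemma has_grad_add:
  "has_grad f P y \<Longrightarrow> has_grad g Q y \<Longrightarrow> has_grad (\<lambda>z. f z + g z) (\<lambda>i. P i + Q i) y"
  unfolding has_grad_def by (drule (1) has_derivative_add) (simp add: distrib_left sum.distrib)

lemma has_grad_diff:
  "has_grad f P y \<Longrightarrow> has_grad g Q y \<Longrightarrow> has_grad (\<lambda>z. f z - g z) (\<lambda>i. P i - Q i) y"
  unfolding has_grad_def by (drule (1) has_derivative_diff) (simp add: right_diff_distrib sum_subtractf)

lemma has_grad_mult:
  "has_grad f P y \<Longrightarrow> has_grad g Q y \<Longrightarrow> has_grad (\<lambda>z. f z * g z) (\<lambda>i. f y * Q i + P i * g y) y"
  unfolding has_grad_def
  by (drule (1) has_derivative_mult)
     (simp add: distrib_left sum.distrib sum_distrib_left sum_distrib_right mult.assoc mult.left_commute)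

lemma has_grad_sum:
  "(\<And>j. j \<in> J \<Longrightarrow> has_grad (f j) (P j) y) \<Longrightarrow> has_grad (\<lambda>z. \<Sum>j\<in>J. f j z) (\<lambda>i. \<Sum>j\<in>J. P j i) y"
  unfolding has_grad_def
  by (drule has_derivative_sum) (simp add: sum_distrib_left, subst sum.swap, simp)

lemma has_grad_imp_continuous_on:
  "(\<And>y. y \<in> U \<Longrightarrow> has_grad f (P y) y) \<Longrightarrow> continuous_on U f"
  unfolding has_grad_def by (rule continuous_at_imp_continuous_on) (use has_derivative_continuous in blast)

lemma has_grad_chain:
  assumes "(\<gamma> has_vector_derivative \<gamma>') (at s within S)" and "has_grad f P (\<gamma> s)"
  shows "((\<lambda>s. f (\<gamma> s)) has_real_derivative (\<Sum>i\<in>UNIV. \<gamma>'$i * P i)) (at s within S)"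
proof -
  have "(f has_derivative (\<lambda>h. \<Sum>i\<in>UNIV. h$i * P i)) (at (\<gamma> s) within \<gamma> ` S)"
    using assms(2) unfolding has_grad_def by (rule has_derivative_at_withinI)
  from vector_derivative_diff_chain_within[OF assms(1) this]
  show ?thesis by (simp add: o_def has_real_derivative_iff_has_vector_derivative)
qed

lemma partial_eq_grad:
  assumes "has_grad f P y"
  shows "partial i f y = P i"
proof -
  have "((\<lambda>t. y + t *\<^sub>R axis i 1) has_vector_derivative axis i 1) (at 0)"
    by (rule has_vector_derivative_eq_rhs, (rule derivative_intros)+, simp)
  from has_grad_chain[OF this] assms
  have "((\<lambda>t. f (y + t *\<^sub>R axis i 1)) has_real_derivative P i) (at 0)"
    by (simp add: axis_def if_distrib[of "\<lambda>c. c * _"] cong: if_cong)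
  then show ?thesis unfolding partial_def by (rule DERIV_imp_deriv)
qed

lemma has_grad_partials:
  assumes "f differentiable (at y)"
  shows "has_grad f (\<lambda>i. partial i f y) y"
proof -
  from assms obtain f' where f': "(f has_derivative f') (at y)" by (auto simp: differentiable_def)
  have "f' h = (\<Sum>i\<in>UNIV. h$i * f' (axis i 1))" for h
  proof -
    have "f' h = f' (\<Sum>i\<in>UNIV. h$i *\<^sub>R axis i 1)"
      using basis_expansion[of h, unfolded scalar_mult_eq_scaleR] by (simp only:)
    also have "\<dots> = (\<Sum>i\<in>UNIV. h$i * f' (axis i 1))"
      using has_derivative_linear[OF f'] by (simp add: linear_sum linear_scale)
    finally show ?thesis .
  qed
  then have grad: "has_grad f (\<lambda>i. f' (axis i 1)) y"
    unfolding has_grad_def by (intro has_derivative_eq_rhs[OF f'] ext)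
  then show ?thesis by (rule has_grad_eq_rhs) (simp add: partial_eq_grad[OF grad])
qed

lemma partial_cong:
  assumes "open S" "y \<in> S" "\<And>z. z \<in> S \<Longrightarrow> f z = g z"
  shows "partial i f y = partial i g y"
proof -
  have "open ((\<lambda>t::real. y + t *\<^sub>R axis i 1) -` S)"
    by (rule continuous_open_vimage[OF assms(1)]) (intro continuous_intros)
  then have "eventually (\<lambda>t. y + t *\<^sub>R axis i 1 \<in> S) (nhds 0)"
    using eventually_nhds_in_open assms(2) by fastforce
  then have "eventually (\<lambda>t. f (y + t *\<^sub>R axis i 1) = g (y + t *\<^sub>R axis i 1)) (nhds 0)"
    by (rule eventually_mono) (simp add: assms(3))
  then show ?thesis
    unfolding partial_def deriv_def by (simp add: DERIV_cong_ev[OF refl _ refl])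
qed

section \<open>Spherical coordinates and spherical means\<close>

lemma sph_nth [simp]:
  "sph \<theta> \<phi> $ 1 = sin \<theta> * cos \<phi>" "sph \<theta> \<phi> $ 2 = sin \<theta> * sin \<phi>" "sph \<theta> \<phi> $ 3 = cos \<theta>"
  by (simp_all add: sph_def)

lemma sph_eq_axis_sum:
  "sph \<theta> \<phi> = (sin \<theta> * cos \<phi>) *\<^sub>R axis 1 1 + (sin \<theta> * sin \<phi>) *\<^sub>R axis 2 1 + cos \<theta> *\<^sub>R axis 3 1"
  by (simp add: vec_eq_iff forall_3 axis_def)

lemma norm_sph [simp]: "norm (sph \<theta> \<phi>) = 1"
proof -
  have "sph \<theta> \<phi> \<bullet> sph \<theta> \<phi> = (sin \<theta>)\<^sup>2 * ((sin \<phi>)\<^sup>2 + (cos \<phi>)\<^sup>2) + (cos \<theta>)\<^sup>2"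
    unfolding inner_vec_def sum_3 sph_nth power2_eq_square inner_real_def by algebra
  then show ?thesis by (simp add: norm_eq_sqrt_inner)
qed

lemma continuous_on_sph [continuous_intros]:
  fixes a b :: "'a::t2_space \<Rightarrow> real"
  assumes "continuous_on S a" "continuous_on S b"
  shows "continuous_on S (\<lambda>z. sph (a z) (b z))"
  unfolding sph_eq_axis_sum by (intro continuous_intros assms)

lemma has_real_derivative_sph_theta:
  assumes "has_grad f P (x + t *\<^sub>R sph \<theta> \<phi>)"
  shows "((\<lambda>\<theta>. f (x + t *\<^sub>R sph \<theta> \<phi>)) has_real_derivative
           t * (cos \<theta> * cos \<phi> * P 1 + cos \<theta> * sin \<phi> * P 2 - sin \<theta> * P 3)) (at \<theta> within S)"
proof -
  have "((\<lambda>\<theta>. x + t *\<^sub>R sph \<theta> \<phi>) has_vector_derivative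
          t *\<^sub>R vector [cos \<theta> * cos \<phi>, cos \<theta> * sin \<phi>, - sin \<theta>]) (at \<theta> within S)"
    unfolding sph_eq_axis_sum
    by (rule has_vector_derivative_eq_rhs, (rule derivative_eq_intros refl)+)
       (simp add: vec_eq_iff forall_3 axis_def)
  from has_grad_chain[OF this assms] show ?thesis by (simp add: sum_3 algebra_simps)
qed

lemma has_real_derivative_sph_phi:
  assumes "has_grad f P (x + t *\<^sub>R sph \<theta> \<phi>)"
  shows "((\<lambda>\<phi>. f (x + t *\<^sub>R sph \<theta> \<phi>)) has_real_derivative
           t * (- sin \<theta> * sin \<phi> * P 1 + sin \<theta> * cos \<phi> * P 2)) (at \<phi> within S)"
proof -
  have "((\<lambda>\<phi>. x + t *\<^sub>R sph \<theta> \<phi>) has_vector_derivative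
          t *\<^sub>R vector [- sin \<theta> * sin \<phi>, sin \<theta> * cos \<phi>, 0]) (at \<phi> within S)"
    unfolding sph_eq_axis_sum
    by (rule has_vector_derivative_eq_rhs, (rule derivative_eq_intros refl)+)
       (simp add: vec_eq_iff forall_3 axis_def)
  from has_grad_chain[OF this assms] show ?thesis by (simp add: sum_3 algebra_simps)
qed

lemma sphere_shift_in:
  fixes x :: "real^3"
  assumes "cball x R \<subseteq> U" "\<bar>t\<bar> \<le> R" "norm \<xi> = 1"
  shows "x + t *\<^sub>R \<xi> \<in> U"
  using assms by (auto simp: subset_iff dist_norm)

lemma continuous_on_sphere_shift:
  fixes x :: "real^3"
  assumes "continuous_on U f" "cball x R \<subseteq> U" "\<bar>t\<bar> \<le> R"
  shows "continuous_on (sphere 0 1) (\<lambda>\<xi>. f (x + t *\<^sub>R \<xi>))"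
  by (rule continuous_on_compose2[OF assms(1)], intro continuous_intros)
     (auto intro: sphere_shift_in[OF assms(2,3)])

text \<open>The spherical average as one Henstock-Kurzweil integral over the rectangle of
  spherical coordinates (\<phi>, \<theta>): in this form it can be differentiated under the integral sign.\<close>

definition sph_rect :: "(real \<times> real) set" where
  "sph_rect = cbox (0, 0) (2 * pi, pi)"

definition sphere_mean :: "(real^3 \<Rightarrow> real) \<Rightarrow> real" where
  "sphere_mean g = integral sph_rect (\<lambda>w. g (sph (snd w) (fst w)) * sin (snd w)) / (4 * pi)"

lemma continuous_on_sph_integrand:
  assumes "continuous_on (sphere 0 1) g"
  shows "continuous_on UNIV (\<lambda>w::real \<times> real. g (sph (snd w) (fst w)) * sin (snd w))"
proof -
  have "continuous_on UNIV (\<lambda>w::real \<times> real. g (sph (snd w) (fst w)))"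
    by (rule continuous_on_compose2[OF assms]) (intro continuous_intros, auto)
  then show ?thesis by (intro continuous_intros)
qed

lemma integrable_sph_integrand:
  assumes "continuous_on (sphere 0 1) g"
  shows "(\<lambda>w. g (sph (snd w) (fst w)) * sin (snd w)) integrable_on sph_rect"
  unfolding sph_rect_def
  by (rule integrable_continuous, rule continuous_on_subset[OF continuous_on_sph_integrand[OF assms]]) simp

lemma sphere_avg_eq_sphere_mean:
  assumes "continuous_on (sphere 0 1) g"
  shows "sphere_avg g = sphere_mean g"
proof -
  define h where "h = (\<lambda>w::real \<times> real. g (sph (snd w) (fst w)) * sin (snd w))"
  have h: "continuous_on UNIV h"
    unfolding h_def by (rule continuous_on_sph_integrand[OF assms])
  have h_slice: "continuous_on S (\<lambda>\<theta>. h (\<phi>, \<theta>))" for \<phi> S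
    by (rule continuous_on_compose2[OF h]) (intro continuous_intros, simp)
  have inner: "(LBINT \<theta>=0..pi. g (sph \<theta> \<phi>) * sin \<theta>) = integral {0..pi} (\<lambda>\<theta>. h (\<phi>, \<theta>))" for \<phi>
    using interval_integral_eq_integral[OF _ borel_integrable_atLeastAtMost'[OF h_slice]]
    by (simp add: h_def zero_ereal_def)
  have "continuous_on UNIV (\<lambda>\<phi>. integral (cbox 0 pi) (\<lambda>\<theta>. h (\<phi>, \<theta>)))"
    by (rule integral_continuous_on_param) (auto intro: continuous_on_subset[OF h])
  then have "set_integrable lborel {0..2*pi} (\<lambda>\<phi>. integral {0..pi} (\<lambda>\<theta>. h (\<phi>, \<theta>)))"
    by (intro borel_integrable_atLeastAtMost') (auto simp: cbox_interval intro: continuous_on_subset)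
  from interval_integral_eq_integral[OF _ this]
  have outer: "(LBINT \<phi>=0..2*pi. integral {0..pi} (\<lambda>\<theta>. h (\<phi>, \<theta>)))
      = integral {0..2*pi} (\<lambda>\<phi>. integral {0..pi} (\<lambda>\<theta>. h (\<phi>, \<theta>)))"
    by (simp add: zero_ereal_def)
  have "integral sph_rect h = integral {0..2*pi} (\<lambda>\<phi>. integral {0..pi} (\<lambda>\<theta>. h (\<phi>, \<theta>)))"
    unfolding sph_rect_def
    by (subst integral_prod_continuous) (auto simp: cbox_interval intro: continuous_on_subset[OF h])
  then show ?thesis
    unfolding sphere_avg_def sphere_mean_def inner outer by (simp add: h_def)
qed

lemma sphere_mean_cong:
  "(\<And>\<xi>. norm \<xi> = 1 \<Longrightarrow> g \<xi> = h \<xi>) \<Longrightarrow> sphere_mean g = sphere_mean h"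
  unfolding sphere_mean_def by simp

lemma sphere_mean_zero [simp]: "sphere_mean (\<lambda>\<xi>. 0) = 0"
  unfolding sphere_mean_def by simp

lemma sphere_mean_cmult: "sphere_mean (\<lambda>\<xi>. c * g \<xi>) = c * sphere_mean g"
  unfolding sphere_mean_def by (simp add: mult.assoc)

lemma sphere_mean_add:
  assumes "continuous_on (sphere 0 1) g" "continuous_on (sphere 0 1) h"
  shows "sphere_mean (\<lambda>\<xi>. g \<xi> + h \<xi>) = sphere_mean g + sphere_mean h"
  unfolding sphere_mean_def distrib_right add_divide_distrib[symmetric]
  by (rule arg_cong[where f="\<lambda>a. a / _"], rule integral_add)
     (use integrable_sph_integrand[OF assms(1)] integrable_sph_integrand[OF assms(2)] in auto)

lemma sphere_mean_diff:
  assumes "continuous_on (sphere 0 1) g" "continuous_on (sphere 0 1) h"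
  shows "sphere_mean (\<lambda>\<xi>. g \<xi> - h \<xi>) = sphere_mean g - sphere_mean h"
  unfolding sphere_mean_def left_diff_distrib diff_divide_distrib[symmetric]
  by (rule arg_cong[where f="\<lambda>a. a / _"], rule integral_diff)
     (use integrable_sph_integrand[OF assms(1)] integrable_sph_integrand[OF assms(2)] in auto)

section \<open>Differentiating spherical means\<close>

lemma continuous_on_compose_pair:
  assumes "continuous_on (UNIV \<times> U) (\<lambda>(\<xi>, y). G \<xi> y)" "continuous_on S a" "continuous_on S b"
    and "\<And>w. w \<in> S \<Longrightarrow> b w \<in> U"
  shows "continuous_on S (\<lambda>w. G (a w) (b w))"
  using continuous_on_compose2[OF assms(1) continuous_on_Pair[OF assms(2,3)]] assms(4) by auto

lemma continuous_on_snd_comp: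
  "continuous_on U f \<Longrightarrow> continuous_on (S \<times> U) (\<lambda>w. f (snd w))"
  by (rule continuous_on_compose2[OF _ continuous_on_snd]) auto

lemma has_real_derivative_sphere_mean:
  fixes F :: "real^3 \<Rightarrow> real^3 \<Rightarrow> real" and P :: "3 \<Rightarrow> real^3 \<Rightarrow> real^3 \<Rightarrow> real"
  assumes U: "cball x R \<subseteq> U" and s: "\<bar>s\<bar> < R"
    and grad: "\<And>\<xi> y. y \<in> U \<Longrightarrow> has_grad (F \<xi>) (\<lambda>i. P i \<xi> y) y"
    and cont_P: "\<And>i. continuous_on (UNIV \<times> U) (\<lambda>(\<xi>, y). P i \<xi> y)"
    and cont_F: "continuous_on (UNIV \<times> U) (\<lambda>(\<xi>, y). F \<xi> y)"
  shows "((\<lambda>t. sphere_mean (\<lambda>\<xi>. F \<xi> (x + t *\<^sub>R \<xi>))) has_real_derivative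
           sphere_mean (\<lambda>\<xi>. \<Sum>i\<in>UNIV. \<xi>$i * P i \<xi> (x + s *\<^sub>R \<xi>))) (at s)"
proof -
  define R' where "R' = (\<bar>s\<bar> + R) / 2"
  have R': "\<bar>s\<bar> < R'" "R' < R" using s by (auto simp: R'_def)
  define V where "V = {-R'..R'}"
  have inU: "x + t *\<^sub>R sph \<theta> \<phi> \<in> U" if "t \<in> V" for t \<theta> \<phi>
    by (rule sphere_shift_in[OF U]) (use that R' in \<open>auto simp: V_def\<close>)
  define \<Phi> where "\<Phi> t w = F (sph (snd w) (fst w)) (x + t *\<^sub>R sph (snd w) (fst w)) * sin (snd w)" for t w
  define d\<Phi> where "d\<Phi> t w = (\<Sum>i\<in>UNIV. sph (snd w) (fst w) $ i
      * P i (sph (snd w) (fst w)) (x + t *\<^sub>R sph (snd w) (fst w))) * sin (snd w)" for t w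
  have deriv: "((\<lambda>t. \<Phi> t w) has_field_derivative d\<Phi> t w) (at t within V)" if "t \<in> V" for t w
  proof -
    let ?\<xi> = "sph (snd w) (fst w)"
    have "((\<lambda>t. x + t *\<^sub>R ?\<xi>) has_vector_derivative ?\<xi>) (at t within V)"
      by (rule has_vector_derivative_eq_rhs, (rule derivative_intros)+, simp)
    from has_grad_chain[OF this grad[OF inU[OF that]]] show ?thesis
      unfolding \<Phi>_def d\<Phi>_def by (rule DERIV_cmult_right)
  qed
  have cont_sph: "continuous_on S (\<lambda>w::real \<times> real. sph (snd w) (fst w))" for S
    by (intro continuous_intros)
  have "continuous_on sph_rect (\<Phi> t)" if "t \<in> V" for t
    unfolding \<Phi>_def
    by (intro continuous_intros continuous_on_compose_pair[OF cont_F] cont_sph) (use inU[OF that] in auto)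
  then have int: "\<Phi> t integrable_on sph_rect" if "t \<in> V" for t
    using that unfolding sph_rect_def by (blast intro: integrable_continuous)
  have "continuous_on (V \<times> sph_rect) (\<lambda>w. d\<Phi> (fst w) (snd w))"
    unfolding d\<Phi>_def
    by (intro continuous_intros continuous_on_compose_pair[OF cont_P]
          continuous_on_compose2[OF cont_sph[of UNIV]]) (auto intro: inU)
  then have cont_d\<Phi>: "continuous_on (V \<times> sph_rect) (\<lambda>(t, w). d\<Phi> t w)"
    by (simp add: split_def)
  have "((\<lambda>t. integral sph_rect (\<Phi> t)) has_field_derivative integral sph_rect (d\<Phi> s)) (at s within V)"
    unfolding sph_rect_def
    by (rule leibniz_rule_field_derivative[OF deriv])
       (use int cont_d\<Phi> R' in \<open>auto simp: sph_rect_def V_def\<close>)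
  moreover have "at s within V = at s"
    unfolding V_def using R' by (intro at_within_Icc_at) auto
  ultimately show ?thesis
    unfolding sphere_mean_def \<Phi>_def d\<Phi>_def by (simp add: sum_distrib_right DERIV_cdivide)
qed

section \<open>Divergence identities on spheres\<close>

lemma integral_sph_rect_dtheta_eq_0:
  fixes A dA :: "real \<Rightarrow> real \<Rightarrow> real"
  assumes "\<And>\<phi> \<theta>. ((\<lambda>\<theta>. A \<phi> \<theta>) has_real_derivative dA \<phi> \<theta>) (at \<theta>)"
    and "continuous_on UNIV (\<lambda>w. dA (fst w) (snd w))"
    and "\<And>\<phi>. A \<phi> pi = A \<phi> 0"
  shows "integral sph_rect (\<lambda>w. dA (fst w) (snd w)) = 0"
proof -
  have slice: "integral {0..pi} (dA \<phi>) = 0" for \<phi>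
  proof -
    have "(dA \<phi> has_integral (A \<phi> pi - A \<phi> 0)) {0..pi}"
      by (rule fundamental_theorem_of_calculus)
         (auto simp: has_real_derivative_iff_has_vector_derivative[symmetric]
               intro: has_field_derivative_at_within assms(1))
    then show ?thesis using assms(3) by (simp add: integral_unique)
  qed
  show ?thesis
    unfolding sph_rect_def
    by (subst integral_prod_continuous[OF continuous_on_subset[OF assms(2) subset_UNIV]])
       (simp add: cbox_interval slice)
qed

lemma integral_sph_rect_dphi_eq_0:
  fixes B dB :: "real \<Rightarrow> real \<Rightarrow> real"
  assumes "\<And>\<phi> \<theta>. ((\<lambda>\<phi>. B \<phi> \<theta>) has_real_derivative dB \<phi> \<theta>) (at \<phi>)"
    and "continuous_on UNIV (\<lambda>w. dB (fst w) (snd w))"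
    and "\<And>\<theta>. B (2 * pi) \<theta> = B 0 \<theta>"
  shows "integral sph_rect (\<lambda>w. dB (fst w) (snd w)) = 0"
proof -
  have slice: "integral {0..2*pi} (\<lambda>\<phi>. dB \<phi> \<theta>) = 0" for \<theta>
  proof -
    have "((\<lambda>\<phi>. dB \<phi> \<theta>) has_integral (B (2*pi) \<theta> - B 0 \<theta>)) {0..2*pi}"
      by (rule fundamental_theorem_of_calculus)
         (auto simp: has_real_derivative_iff_has_vector_derivative[symmetric]
               intro: has_field_derivative_at_within assms(1))
    then show ?thesis using assms(3) by (simp add: integral_unique)
  qed
  have "integral sph_rect (\<lambda>w. dB (fst w) (snd w))
      = integral (cbox 0 (2*pi)) (\<lambda>\<phi>. integral (cbox 0 pi) (\<lambda>\<theta>. dB \<phi> \<theta>))"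
    unfolding sph_rect_def by (subst integral_prod_continuous[OF continuous_on_subset[OF assms(2) subset_UNIV]]) simp
  also have "\<dots> = integral (cbox 0 pi) (\<lambda>\<theta>. integral (cbox 0 (2*pi)) (\<lambda>\<phi>. dB \<phi> \<theta>))"
    by (rule integral_swap_continuous) (simp add: split_def continuous_on_subset[OF assms(2)])
  finally show ?thesis by (simp add: cbox_interval slice)
qed

lemma sphere_mean_eq_0_if_exact:
  fixes A B dA dB :: "real \<Rightarrow> real \<Rightarrow> real"
  assumes dA: "\<And>\<phi> \<theta>. ((\<lambda>\<theta>. A \<phi> \<theta>) has_real_derivative dA \<phi> \<theta>) (at \<theta>)"
    and dB: "\<And>\<phi> \<theta>. ((\<lambda>\<phi>. B \<phi> \<theta>) has_real_derivative dB \<phi> \<theta>) (at \<phi>)"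
    and cont_dA: "continuous_on UNIV (\<lambda>w. dA (fst w) (snd w))"
    and cont_dB: "continuous_on UNIV (\<lambda>w. dB (fst w) (snd w))"
    and A: "\<And>\<phi>. A \<phi> pi = A \<phi> 0" and B: "\<And>\<theta>. B (2 * pi) \<theta> = B 0 \<theta>"
    and exact: "\<And>\<phi> \<theta>. g (sph \<theta> \<phi>) * sin \<theta> = dA \<phi> \<theta> + dB \<phi> \<theta>"
  shows "sphere_mean g = 0"
proof -
  have "sphere_mean g = integral sph_rect (\<lambda>w. dA (fst w) (snd w) + dB (fst w) (snd w)) / (4 * pi)"
    unfolding sphere_mean_def exact ..
  also have "\<dots> = 0"
    using integral_add[OF integrable_continuous[OF continuous_on_subset[OF cont_dA]]
        integrable_continuous[OF continuous_on_subset[OF cont_dB]]]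
      integral_sph_rect_dtheta_eq_0[OF dA cont_dA A] integral_sph_rect_dphi_eq_0[OF dB cont_dB B]
    by (simp add: sph_rect_def)
  finally show ?thesis .
qed

lemma sphere_mean_surface_divergence:
  fixes Z :: "3 \<Rightarrow> real^3 \<Rightarrow> real" and PZ :: "3 \<Rightarrow> 3 \<Rightarrow> real^3 \<Rightarrow> real"
  assumes U: "cball x R \<subseteq> U" and t: "\<bar>t\<bar> \<le> R"
    and grad: "\<And>k y. y \<in> U \<Longrightarrow> has_grad (Z k) (\<lambda>i. PZ k i y) y"
    and cont_PZ: "\<And>k i. continuous_on U (PZ k i)"
  shows "t\<^sup>2 * sphere_mean (\<lambda>\<xi>. (\<Sum>k\<in>UNIV. PZ k k (x + t *\<^sub>R \<xi>))
                               - (\<Sum>k\<in>UNIV. \<Sum>i\<in>UNIV. \<xi>$k * \<xi>$i * PZ k i (x + t *\<^sub>R \<xi>)))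
       = 2 * t * sphere_mean (\<lambda>\<xi>. \<Sum>k\<in>UNIV. \<xi>$k * Z k (x + t *\<^sub>R \<xi>))"
proof -
  define y where "y \<phi> \<theta> = x + t *\<^sub>R sph \<theta> \<phi>" for \<phi> \<theta>
  have yU: "y \<phi> \<theta> \<in> U" for \<phi> \<theta>
    unfolding y_def by (rule sphere_shift_in[OF U t norm_sph])
  have cont_Z: "continuous_on U (Z k)" for k
    by (rule has_grad_imp_continuous_on[OF grad])
  define z where "z k \<phi> \<theta> = Z k (y \<phi> \<theta>)" for k \<phi> \<theta>
  define q where "q k i \<phi> \<theta> = PZ k i (y \<phi> \<theta>)" for k i \<phi> \<theta>
  have cont_y: "continuous_on S (\<lambda>w. y (fst w) (snd w))" for S
    unfolding y_def by (intro continuous_intros)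
  have cont_z: "continuous_on S (\<lambda>w. z k (fst w) (snd w))" for S k
    unfolding z_def by (rule continuous_on_compose2[OF cont_Z cont_y]) (auto intro: yU)
  have cont_q: "continuous_on S (\<lambda>w. q k i (fst w) (snd w))" for S k i
    unfolding q_def by (rule continuous_on_compose2[OF cont_PZ cont_y]) (auto intro: yU)
  define dz where "dz k \<phi> \<theta> = t * (cos \<theta> * cos \<phi> * q k 1 \<phi> \<theta> + cos \<theta> * sin \<phi> * q k 2 \<phi> \<theta>
      - sin \<theta> * q k 3 \<phi> \<theta>)" for k \<phi> \<theta>
  define ez where "ez k \<phi> \<theta> = t * (- sin \<theta> * sin \<phi> * q k 1 \<phi> \<theta> + sin \<theta> * cos \<phi> * q k 2 \<phi> \<theta>)"
    for k \<phi> \<theta>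
  have dz: "((\<lambda>\<theta>. z k \<phi> \<theta>) has_real_derivative dz k \<phi> \<theta>) (at \<theta>)" for k \<phi> \<theta>
    using has_real_derivative_sph_theta[OF grad[OF yU[unfolded y_def]]]
    unfolding z_def dz_def q_def y_def .
  have ez: "((\<lambda>\<phi>. z k \<phi> \<theta>) has_real_derivative ez k \<phi> \<theta>) (at \<phi>)" for k \<phi> \<theta>
    using has_real_derivative_sph_phi[OF grad[OF yU[unfolded y_def]]]
    unfolding z_def ez_def q_def y_def .
  text \<open>With the tangent frame e\<theta> = (cos \<theta> cos \<phi>, cos \<theta> sin \<phi>, - sin \<theta>),
    e\<phi> = (- sin \<phi>, cos \<phi>, 0), the functions A = t sin \<theta> (e\<theta> \<bullet> Z) and B = t (e\<phi> \<bullet> Z) are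
    the coordinates of the tangential part of Z; \<theta>-derivative of A plus \<phi>-derivative of B
    is sin \<theta> times its surface divergence.\<close>
  define A where "A \<phi> \<theta> = t * sin \<theta> * (cos \<theta> * cos \<phi> * z 1 \<phi> \<theta> + cos \<theta> * sin \<phi> * z 2 \<phi> \<theta>
      - sin \<theta> * z 3 \<phi> \<theta>)" for \<phi> \<theta>
  define dA where "dA \<phi> \<theta> = t * cos \<theta> * (cos \<theta> * cos \<phi> * z 1 \<phi> \<theta> + cos \<theta> * sin \<phi> * z 2 \<phi> \<theta>
      - sin \<theta> * z 3 \<phi> \<theta>) + t * sin \<theta> * (- sin \<theta> * cos \<phi> * z 1 \<phi> \<theta> - sin \<theta> * sin \<phi> * z 2 \<phi> \<theta>
      - cos \<theta> * z 3 \<phi> \<theta> + cos \<theta> * cos \<phi> * dz 1 \<phi> \<theta> + cos \<theta> * sin \<phi> * dz 2 \<phi> \<theta>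
      - sin \<theta> * dz 3 \<phi> \<theta>)" for \<phi> \<theta>
  define B where "B \<phi> \<theta> = t * (- sin \<phi> * z 1 \<phi> \<theta> + cos \<phi> * z 2 \<phi> \<theta>)" for \<phi> \<theta>
  define dB where "dB \<phi> \<theta> = t * (- cos \<phi> * z 1 \<phi> \<theta> - sin \<phi> * z 2 \<phi> \<theta> - sin \<phi> * ez 1 \<phi> \<theta>
      + cos \<phi> * ez 2 \<phi> \<theta>)" for \<phi> \<theta>
  define G where "G \<xi> = t\<^sup>2 * ((\<Sum>k\<in>UNIV. PZ k k (x + t *\<^sub>R \<xi>))
      - (\<Sum>k\<in>UNIV. \<Sum>i\<in>UNIV. \<xi>$k * \<xi>$i * PZ k i (x + t *\<^sub>R \<xi>)))
      - 2 * t * (\<Sum>k\<in>UNIV. \<xi>$k * Z k (x + t *\<^sub>R \<xi>))" for \<xi>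
  have "sphere_mean G = 0"
  proof (rule sphere_mean_eq_0_if_exact)
    show "((\<lambda>\<theta>. A \<phi> \<theta>) has_real_derivative dA \<phi> \<theta>) (at \<theta>)" for \<phi> \<theta>
      unfolding A_def by (rule derivative_eq_intros dz refl)+ (simp add: dA_def algebra_simps)
    show "((\<lambda>\<phi>. B \<phi> \<theta>) has_real_derivative dB \<phi> \<theta>) (at \<phi>)" for \<phi> \<theta>
      unfolding B_def by (rule derivative_eq_intros ez refl)+ (simp add: dB_def algebra_simps)
    show "continuous_on UNIV (\<lambda>w. dA (fst w) (snd w))"
      unfolding dA_def dz_def by (intro continuous_intros cont_z cont_q)
    show "continuous_on UNIV (\<lambda>w. dB (fst w) (snd w))"
      unfolding dB_def ez_def by (intro continuous_intros cont_z cont_q)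
    show "A \<phi> pi = A \<phi> 0" for \<phi> by (simp add: A_def)
    show "B (2 * pi) \<theta> = B 0 \<theta>" for \<theta> by (simp add: B_def z_def y_def sph_def)
    text \<open>The frame identity e\<theta> \<otimes> e\<theta> + e\<phi> \<otimes> e\<phi> = I - \<xi> \<otimes> \<xi> yields the tangential trace of the
      Jacobian, and the derivatives of the frame (d e\<theta>/d\<theta> = - \<xi>,
      d e\<phi>/d\<phi> = - sin \<theta> \<xi> - cos \<theta> e\<theta>) yield the curvature term -2 t (\<xi> \<bullet> Z).\<close>
    show "G (sph \<theta> \<phi>) * sin \<theta> = dA \<phi> \<theta> + dB \<phi> \<theta>" for \<phi> \<theta>
      unfolding G_def dA_def dB_def dz_def ez_def z_def q_def y_def sum_3 sph_nth
      using sin_cos_squared_add[of \<theta>] sin_cos_squared_add[of \<phi>] by algebra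
  qed
  moreover have cont: "continuous_on (sphere 0 1) (\<lambda>\<xi>. f (x + t *\<^sub>R \<xi>))"
    if "continuous_on U f" for f :: "real^3 \<Rightarrow> real"
    by (rule continuous_on_sphere_shift[OF that U t])
  ultimately show ?thesis
    unfolding G_def
    by (subst (asm) sphere_mean_diff, (intro continuous_intros cont cont_PZ cont_Z)+)
       (simp add: sphere_mean_cmult)
qed

lemma has_real_derivative_flux_mean:
  fixes Z :: "3 \<Rightarrow> real^3 \<Rightarrow> real" and PZ :: "3 \<Rightarrow> 3 \<Rightarrow> real^3 \<Rightarrow> real"
  assumes U: "cball x R \<subseteq> U" and s: "\<bar>s\<bar> < R"
    and grad: "\<And>k y. y \<in> U \<Longrightarrow> has_grad (Z k) (\<lambda>i. PZ k i y) y"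
    and cont_PZ: "\<And>k i. continuous_on U (PZ k i)"
  shows "((\<lambda>t. t\<^sup>2 * sphere_mean (\<lambda>\<xi>. \<Sum>k\<in>UNIV. \<xi>$k * Z k (x + t *\<^sub>R \<xi>))) has_real_derivative
           s\<^sup>2 * sphere_mean (\<lambda>\<xi>. \<Sum>k\<in>UNIV. PZ k k (x + s *\<^sub>R \<xi>))) (at s)"
proof -
  have cont_Z: "continuous_on U (Z k)" for k
    by (rule has_grad_imp_continuous_on[OF grad])
  define F where "F \<xi> y = (\<Sum>k\<in>UNIV. \<xi>$k * Z k y)" for \<xi> :: "real^3" and y
  define P where "P i \<xi> y = (\<Sum>k\<in>UNIV. \<xi>$k * PZ k i y)" for i and \<xi> :: "real^3" and y
  have "has_grad (F \<xi>) (\<lambda>i. P i \<xi> y) y" if "y \<in> U" for \<xi> y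
    unfolding F_def P_def
    by (rule has_grad_eq_rhs[OF has_grad_sum[OF has_grad_mult[OF has_grad_const grad[OF that]]]]) simp
  moreover have "continuous_on (UNIV \<times> U) (\<lambda>(\<xi>, y). P i \<xi> y)" for i
    unfolding P_def split_def by (intro continuous_intros continuous_on_snd_comp cont_PZ)
  moreover have "continuous_on (UNIV \<times> U) (\<lambda>(\<xi>, y). F \<xi> y)"
    unfolding F_def split_def by (intro continuous_intros continuous_on_snd_comp cont_Z)
  ultimately have deriv_mean: "((\<lambda>t. sphere_mean (\<lambda>\<xi>. F \<xi> (x + t *\<^sub>R \<xi>))) has_real_derivative
      sphere_mean (\<lambda>\<xi>. \<Sum>i\<in>UNIV. \<xi>$i * P i \<xi> (x + s *\<^sub>R \<xi>))) (at s)"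
    by (rule has_real_derivative_sphere_mean[OF U s])
  have "sphere_mean (\<lambda>\<xi>. \<Sum>i\<in>UNIV. \<xi>$i * P i \<xi> (x + s *\<^sub>R \<xi>))
      = sphere_mean (\<lambda>\<xi>. \<Sum>k\<in>UNIV. \<Sum>i\<in>UNIV. \<xi>$k * \<xi>$i * PZ k i (x + s *\<^sub>R \<xi>))"
    unfolding P_def sum_distrib_left
    by (rule sphere_mean_cong, subst sum.swap) (simp add: mult.left_commute mult.assoc)
  note deriv_mean = deriv_mean[unfolded this]
  have cont: "continuous_on (sphere 0 1) (\<lambda>\<xi>. f (x + s *\<^sub>R \<xi>))"
    if "continuous_on U f" for f :: "real^3 \<Rightarrow> real"
    using continuous_on_sphere_shift[OF that U] s by simp
  text \<open>The surface divergence identity turns the term 2 s mean(\<xi> \<bullet> Z) of the product rule into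
    the tangential part of s^2 mean(\<nabla> \<bullet> Z).\<close>
  have "s\<^sup>2 * sphere_mean (\<lambda>\<xi>. (\<Sum>k\<in>UNIV. PZ k k (x + s *\<^sub>R \<xi>))
         - (\<Sum>k\<in>UNIV. \<Sum>i\<in>UNIV. \<xi>$k * \<xi>$i * PZ k i (x + s *\<^sub>R \<xi>)))
      = 2 * s * sphere_mean (\<lambda>\<xi>. F \<xi> (x + s *\<^sub>R \<xi>))"
    unfolding F_def by (rule sphere_mean_surface_divergence[OF U _ grad cont_PZ]) (use s in simp)
  then have "s\<^sup>2 * (sphere_mean (\<lambda>\<xi>. \<Sum>k\<in>UNIV. PZ k k (x + s *\<^sub>R \<xi>))
         - sphere_mean (\<lambda>\<xi>. \<Sum>k\<in>UNIV. \<Sum>i\<in>UNIV. \<xi>$k * \<xi>$i * PZ k i (x + s *\<^sub>R \<xi>)))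
      = 2 * s * sphere_mean (\<lambda>\<xi>. F \<xi> (x + s *\<^sub>R \<xi>))"
    by (subst (asm) sphere_mean_diff, (intro continuous_intros cont cont_PZ)+)
  then have "2 * s * sphere_mean (\<lambda>\<xi>. F \<xi> (x + s *\<^sub>R \<xi>))
      + s\<^sup>2 * sphere_mean (\<lambda>\<xi>. \<Sum>k\<in>UNIV. \<Sum>i\<in>UNIV. \<xi>$k * \<xi>$i * PZ k i (x + s *\<^sub>R \<xi>))
      = s\<^sup>2 * sphere_mean (\<lambda>\<xi>. \<Sum>k\<in>UNIV. PZ k k (x + s *\<^sub>R \<xi>))"
    by (simp add: algebra_simps)
  with DERIV_mult[OF DERIV_pow[of 2 s, simplified] deriv_mean] show ?thesis
    unfolding F_def by (simp add: mult.commute)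
qed

lemma sphere_mean_flux_eq_0:
  fixes W :: "3 \<Rightarrow> real^3 \<Rightarrow> real" and PW :: "3 \<Rightarrow> 3 \<Rightarrow> real^3 \<Rightarrow> real"
  assumes U: "cball x R \<subseteq> U" and r: "0 < r" "r < R"
    and grad: "\<And>k y. y \<in> U \<Longrightarrow> has_grad (W k) (\<lambda>i. PW k i y) y"
    and cont_PW: "\<And>k i. continuous_on U (PW k i)"
    and div_free: "\<And>y. y \<in> U \<Longrightarrow> (\<Sum>k\<in>UNIV. PW k k y) = 0"
  shows "sphere_mean (\<lambda>\<xi>. \<Sum>k\<in>UNIV. \<xi>$k * W k (x + r *\<^sub>R \<xi>)) = 0"
proof -
  define flux where "flux t = t\<^sup>2 * sphere_mean (\<lambda>\<xi>. \<Sum>k\<in>UNIV. \<xi>$k * W k (x + t *\<^sub>R \<xi>))" for t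
  have deriv: "(flux has_real_derivative 0) (at t)" if "t \<in> {-R<..<R}" for t
  proof -
    have t: "\<bar>t\<bar> < R" using that by auto
    then have "sphere_mean (\<lambda>\<xi>. \<Sum>k\<in>UNIV. PW k k (x + t *\<^sub>R \<xi>)) = 0"
      by (simp add: sphere_mean_cong div_free sphere_shift_in[OF U])
    with has_real_derivative_flux_mean[where Z=W and PZ=PW, OF U t grad cont_PW] show ?thesis
      unfolding flux_def by simp
  qed
  have "flux r = flux 0"
    by (rule DERIV_isconst3[of "-R" R]) (use r deriv in auto)
  then show ?thesis using r by (simp add: flux_def)
qed

section \<open>Identities for the velocity field\<close>

lemma sum_partial_partial_mult_eq:
  fixes u :: "real^3 \<Rightarrow> real^3"
  assumes "open \<Omega>" and "y \<in> \<Omega>"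
    and diff_u: "\<And>k z. z \<in> \<Omega> \<Longrightarrow> (\<lambda>z. u z $ k) differentiable (at z)"
    and diff_Du: "\<And>k i z. z \<in> \<Omega> \<Longrightarrow> partial i (\<lambda>z. u z $ k) differentiable (at z)"
    and div_u: "\<And>z. z \<in> \<Omega> \<Longrightarrow> (\<Sum>i\<in>UNIV. partial i (\<lambda>z. u z $ i) z) = 0"
  shows "(\<Sum>i\<in>UNIV. \<Sum>j\<in>UNIV. partial i (partial j (\<lambda>z. u z $ i * u z $ j)) y)
       = (\<Sum>k\<in>UNIV. \<Sum>j\<in>UNIV. partial k (\<lambda>z. u z $ j) y * partial j (\<lambda>z. u z $ k) y
                              + u y $ j * partial k (partial j (\<lambda>z. u z $ k)) y)"
proof -
  define U where "U k = (\<lambda>z. u z $ k)" for k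
  have grad_U: "has_grad (U k) (\<lambda>i. partial i (U k) z) z" if "z \<in> \<Omega>" for k z
    unfolding U_def by (rule has_grad_partials[OF diff_u[OF that]])
  have grad_DU: "has_grad (partial j (U k)) (\<lambda>i. partial i (partial j (U k)) z) z" if "z \<in> \<Omega>" for j k z
    unfolding U_def by (rule has_grad_partials[OF diff_Du[OF that]])
  have expand: "partial i (partial j (\<lambda>z. u z $ i * u z $ j)) y
      = u y $ i * partial i (partial j (U j)) y + partial i (U i) y * partial j (U j) y
        + (partial j (U i) y * partial i (U j) y + partial i (partial j (U i)) y * u y $ j)" for i j
  proof -
    have "partial j (\<lambda>z. U i z * U j z) z = U i z * partial j (U j) z + partial j (U i) z * U j z"
      if "z \<in> \<Omega>" for z
      using partial_eq_grad[OF has_grad_mult[OF grad_U[OF that] grad_U[OF that]]] .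
    then have "partial i (partial j (\<lambda>z. U i z * U j z)) y
        = partial i (\<lambda>z. U i z * partial j (U j) z + partial j (U i) z * U j z) y"
      by (rule partial_cong[OF assms(1,2)])
    also have "\<dots> = U i y * partial i (partial j (U j)) y + partial i (U i) y * partial j (U j) y
        + (partial j (U i) y * partial i (U j) y + partial i (partial j (U i)) y * U j y)"
      using assms(2) by (intro partial_eq_grad has_grad_add has_grad_mult grad_U grad_DU)
    finally show ?thesis by (simp add: U_def)
  qed
  have div_U: "(\<Sum>j\<in>UNIV. partial j (U j) y) = 0"
    using div_u[OF assms(2)] by (simp add: U_def)
  have "partial i (\<lambda>z. \<Sum>j\<in>UNIV. partial j (U j) z) y = (\<Sum>j\<in>UNIV. partial i (partial j (U j)) y)" for i
    by (rule partial_eq_grad[OF has_grad_sum[OF grad_DU[OF assms(2)]]])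
  moreover have "partial i (\<lambda>z. \<Sum>j\<in>UNIV. partial j (U j) z) y = partial i (\<lambda>z. 0) y" for i
    by (rule partial_cong[OF assms(1,2)]) (simp add: div_u U_def)
  ultimately have grad_div_U: "(\<Sum>j\<in>UNIV. partial i (partial j (U j)) y) = 0" for i
    using partial_eq_grad[OF has_grad_const] by metis
  show ?thesis
    unfolding expand U_def[symmetric]
    using div_U grad_div_U[of 1] grad_div_U[of 2] grad_div_U[of 3] unfolding sum_3 by algebra
qed

definition gradient :: "(real^3 \<Rightarrow> real) \<Rightarrow> real^3 \<Rightarrow> real^3" where
  "gradient f y = (\<chi> i. partial i f y)"

definition directional_deriv :: "(real^3 \<Rightarrow> real^3) \<Rightarrow> real^3 \<Rightarrow> real^3 \<Rightarrow> real^3" where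
  "directional_deriv u a y = (\<chi> k. \<Sum>j\<in>UNIV. a $ j * partial j (\<lambda>z. u z $ k) y)"

definition transport_field :: "(real^3 \<Rightarrow> real^3) \<Rightarrow> real^3 \<Rightarrow> real^3 \<Rightarrow> 3 \<Rightarrow> real^3 \<Rightarrow> real" where
  "transport_field u x v k y = ((y - x) \<bullet> (u y - v)) * u y $ k - ((y - x) \<bullet> v) * (u y $ k - v $ k)"

definition transport_field_grad ::
    "(real^3 \<Rightarrow> real^3) \<Rightarrow> real^3 \<Rightarrow> real^3 \<Rightarrow> 3 \<Rightarrow> 3 \<Rightarrow> real^3 \<Rightarrow> real" where
  "transport_field_grad u x v k i y = ((y - x) \<bullet> (u y - v)) * partial i (\<lambda>z. u z $ k) y
     + ((\<Sum>j\<in>UNIV. (y $ j - x $ j) * partial i (\<lambda>z. u z $ j) y) + (u y $ i - v $ i)) * u y $ k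
     - (((y - x) \<bullet> v) * partial i (\<lambda>z. u z $ k) y + v $ i * (u y $ k - v $ k))"

lemma has_grad_transport_field:
  assumes grad_u: "\<And>k. has_grad (\<lambda>z. u z $ k) (\<lambda>i. partial i (\<lambda>z. u z $ k) y) y"
  shows "has_grad (transport_field u x v k) (\<lambda>i. transport_field_grad u x v k i y) y"
proof -
  have sum_delta: "(\<Sum>j\<in>UNIV. (if i = j then 1 else 0) * f j) = (f i :: real)" for i :: 3 and f
    by (simp add: if_distrib[of "\<lambda>c. c * _"] cong: if_cong)
  have grad_M: "has_grad (\<lambda>z. (z - x) \<bullet> (u z - v))
      (\<lambda>i. (\<Sum>j\<in>UNIV. (y $ j - x $ j) * partial i (\<lambda>z. u z $ j) y) + (u y $ i - v $ i)) y"
    unfolding inner_vec_def vector_minus_component inner_real_def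
    by (rule has_grad_eq_rhs[OF has_grad_sum[OF has_grad_mult[OF
          has_grad_diff[OF has_grad_component has_grad_const] has_grad_diff[OF grad_u has_grad_const]]]])
       (simp add: sum.distrib sum_delta)
  have grad_N: "has_grad (\<lambda>z. (z - x) \<bullet> v) (\<lambda>i. v $ i) y"
    unfolding inner_vec_def vector_minus_component inner_real_def
    by (rule has_grad_eq_rhs[OF has_grad_sum[OF has_grad_mult[OF
          has_grad_diff[OF has_grad_component has_grad_const] has_grad_const]]])
       (simp add: sum_delta)
  show ?thesis
    unfolding transport_field_def[abs_def] transport_field_grad_def
    by (rule has_grad_eq_rhs[OF has_grad_diff[OF has_grad_mult[OF grad_M grad_u]
          has_grad_mult[OF grad_N has_grad_diff[OF grad_u has_grad_const]]]]) simp
qed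

lemma inner_transport_field:
  "(\<Sum>k\<in>UNIV. \<xi> $ k * transport_field u x v k (x + r *\<^sub>R \<xi>)) = r * (\<xi> \<bullet> (u (x + r *\<^sub>R \<xi>) - v))\<^sup>2"
  unfolding transport_field_def inner_vec_def inner_real_def vector_minus_component sum_3
  by (simp add: power2_eq_square algebra_simps)

lemma tangential_divergence_transport_field:
  assumes "(\<Sum>i\<in>UNIV. partial i (\<lambda>z. u z $ i) (x + r *\<^sub>R \<xi>)) = 0"
  shows "(\<Sum>k\<in>UNIV. transport_field_grad u x v k k (x + r *\<^sub>R \<xi>))
      - (\<Sum>k\<in>UNIV. \<Sum>i\<in>UNIV. \<xi> $ k * \<xi> $ i * transport_field_grad u x v k i (x + r *\<^sub>R \<xi>))
    = r * (\<xi> \<bullet> directional_deriv u (u (x + r *\<^sub>R \<xi>)) (x + r *\<^sub>R \<xi>)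
           - 2 * (\<xi> \<bullet> (u (x + r *\<^sub>R \<xi>) - v)) * (\<xi> \<bullet> directional_deriv u \<xi> (x + r *\<^sub>R \<xi>)))
      + ((norm (u (x + r *\<^sub>R \<xi>) - v))\<^sup>2 - (\<xi> \<bullet> (u (x + r *\<^sub>R \<xi>) - v))\<^sup>2)"
proof -
  have comp: "(x + r *\<^sub>R \<xi>) $ j - x $ j = r * \<xi> $ j" for j by simp
  show ?thesis
    using assms
    unfolding transport_field_grad_def power2_norm_eq_inner inner_vec_def inner_real_def
      directional_deriv_def vec_lambda_beta vector_minus_component comp sum_3
    by algebra
qed

section \<open>The pressure equation\<close>

locale pressure_poisson =
  fixes \<Omega> :: "(real^3) set" and u :: "real^3 \<Rightarrow> real^3" and p :: "real^3 \<Rightarrow> real"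
  assumes open_domain: "open \<Omega>"
    and C2_u: "\<And>k. C2_on \<Omega> (\<lambda>y. u y $ k)"
    and div_u: "\<And>y. y \<in> \<Omega> \<Longrightarrow> (\<Sum>i\<in>UNIV. partial i (\<lambda>z. u z $ i) y) = 0"
    and C2_p: "C2_on \<Omega> p"
    and poisson: "\<And>y. y \<in> \<Omega> \<Longrightarrow>
      - laplacian p y = (\<Sum>i\<in>UNIV. \<Sum>j\<in>UNIV. partial i (partial j (\<lambda>z. u z $ i * u z $ j)) y)"
begin

lemma differentiable_u: "y \<in> \<Omega> \<Longrightarrow> (\<lambda>z. u z $ k) differentiable (at y)"
  and differentiable_partial_u: "y \<in> \<Omega> \<Longrightarrow> partial i (\<lambda>z. u z $ k) differentiable (at y)"
  and continuous_on_partial2_u: "continuous_on \<Omega> (partial j (partial i (\<lambda>z. u z $ k)))"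
  and differentiable_p: "y \<in> \<Omega> \<Longrightarrow> p differentiable (at y)"
  and differentiable_partial_p: "y \<in> \<Omega> \<Longrightarrow> partial i p differentiable (at y)"
  and continuous_on_partial2_p: "continuous_on \<Omega> (partial j (partial i p))"
  using C2_u C2_p unfolding C2_on_def by blast+

lemma continuous_on_u_component: "continuous_on \<Omega> (\<lambda>z. u z $ k)"
  and continuous_on_partial_u: "continuous_on \<Omega> (partial i (\<lambda>z. u z $ k))"
  and continuous_on_p: "continuous_on \<Omega> p"
  and continuous_on_partial_p: "continuous_on \<Omega> (partial i p)"
  by (auto intro!: differentiable_imp_continuous_on differentiable_at_imp_differentiable_on
      differentiable_u differentiable_partial_u differentiable_p differentiable_partial_p)

lemma continuous_on_u: "continuous_on \<Omega> u"
proof -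
  have "continuous_on \<Omega> (\<lambda>z. \<chi> k. u z $ k)"
    by (intro continuous_on_vec_lambda continuous_on_u_component)
  then show ?thesis by simp
qed

lemma has_grad_u: "y \<in> \<Omega> \<Longrightarrow> has_grad (\<lambda>z. u z $ k) (\<lambda>i. partial i (\<lambda>z. u z $ k) y) y"
  and has_grad_partial_u:
    "y \<in> \<Omega> \<Longrightarrow> has_grad (partial j (\<lambda>z. u z $ k)) (\<lambda>i. partial i (partial j (\<lambda>z. u z $ k)) y) y"
  and has_grad_p: "y \<in> \<Omega> \<Longrightarrow> has_grad p (\<lambda>i. partial i p y) y"
  and has_grad_partial_p: "y \<in> \<Omega> \<Longrightarrow> has_grad (partial j p) (\<lambda>i. partial i (partial j p) y) y"
  by (intro has_grad_partials differentiable_u differentiable_partial_u differentiable_p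
      differentiable_partial_p; assumption)+


lemma sphere_mean_pressure_flux:
  assumes ball: "cball x R \<subseteq> \<Omega>" and r: "0 < r" "r < R"
  shows "sphere_mean (\<lambda>\<xi>. \<xi> \<bullet> gradient p (x + r *\<^sub>R \<xi>))
       = - sphere_mean (\<lambda>\<xi>. \<xi> \<bullet> directional_deriv u (u (x + r *\<^sub>R \<xi>)) (x + r *\<^sub>R \<xi>))"
proof -
  text \<open>The Poisson equation for p says exactly that W = \<nabla>p + (u \<bullet> \<nabla>) u is divergence free.\<close>
  define W where "W k y = partial k p y + (\<Sum>j\<in>UNIV. u y $ j * partial j (\<lambda>z. u z $ k) y)" for k y
  define PW where "PW k i y = partial i (partial k p) y + (\<Sum>j\<in>UNIV. u y $ j * partial i (partial j (\<lambda>z. u z $ k)) y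
      + partial i (\<lambda>z. u z $ j) y * partial j (\<lambda>z. u z $ k) y)" for k i y
  have "has_grad (W k) (\<lambda>i. PW k i y) y" if "y \<in> \<Omega>" for k y
    unfolding W_def PW_def using that
    by (intro has_grad_add has_grad_sum has_grad_mult has_grad_partial_p has_grad_u has_grad_partial_u)
  moreover have "continuous_on \<Omega> (PW k i)" for k i
    unfolding PW_def
    by (intro continuous_intros continuous_on_partial2_p continuous_on_u_component
        continuous_on_partial2_u continuous_on_partial_u)
  moreover have "(\<Sum>k\<in>UNIV. PW k k y) = 0" if "y \<in> \<Omega>" for y
    using sum_partial_partial_mult_eq[OF open_domain that differentiable_u differentiable_partial_u div_u]
      poisson[OF that]
    unfolding PW_def laplacian_def by (simp add: sum.distrib algebra_simps)
  ultimately have "sphere_mean (\<lambda>\<xi>. \<Sum>k\<in>UNIV. \<xi> $ k * W k (x + r *\<^sub>R \<xi>)) = 0"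
    by (rule sphere_mean_flux_eq_0[OF ball r])
  moreover have "sphere_mean (\<lambda>\<xi>. \<Sum>k\<in>UNIV. \<xi> $ k * W k (x + r *\<^sub>R \<xi>))
      = sphere_mean (\<lambda>\<xi>. \<xi> \<bullet> gradient p (x + r *\<^sub>R \<xi>)
          + \<xi> \<bullet> directional_deriv u (u (x + r *\<^sub>R \<xi>)) (x + r *\<^sub>R \<xi>))"
    by (rule sphere_mean_cong)
       (simp add: W_def gradient_def directional_deriv_def inner_vec_def distrib_left sum.distrib)
  moreover have "\<dots> = sphere_mean (\<lambda>\<xi>. \<xi> \<bullet> gradient p (x + r *\<^sub>R \<xi>))
      + sphere_mean (\<lambda>\<xi>. \<xi> \<bullet> directional_deriv u (u (x + r *\<^sub>R \<xi>)) (x + r *\<^sub>R \<xi>))"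
    using r unfolding gradient_def directional_deriv_def inner_vec_def
    by (intro sphere_mean_add continuous_intros continuous_on_sphere_shift[OF _ ball]
        continuous_on_partial_p continuous_on_u_component continuous_on_partial_u) auto
  ultimately show ?thesis by simp
qed


lemma has_real_derivative_sphere_means:
  assumes ball: "cball x R \<subseteq> \<Omega>" and r: "\<bar>r\<bar> < R"
  shows "((\<lambda>s. sphere_mean (\<lambda>\<xi>. p (x + s *\<^sub>R \<xi>)) + sphere_mean (\<lambda>\<xi>. (\<xi> \<bullet> (u (x + s *\<^sub>R \<xi>) - v))\<^sup>2))
          has_real_derivative sphere_mean (\<lambda>\<xi>. \<xi> \<bullet> gradient p (x + r *\<^sub>R \<xi>))
            + sphere_mean (\<lambda>\<xi>. 2 * (\<xi> \<bullet> (u (x + r *\<^sub>R \<xi>) - v))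
                                    * (\<xi> \<bullet> directional_deriv u \<xi> (x + r *\<^sub>R \<xi>)))) (at r)"
proof -
  have deriv_p: "((\<lambda>s. sphere_mean (\<lambda>\<xi>. p (x + s *\<^sub>R \<xi>))) has_real_derivative
      sphere_mean (\<lambda>\<xi>. \<Sum>i\<in>UNIV. \<xi> $ i * partial i p (x + r *\<^sub>R \<xi>))) (at r)"
    by (rule has_real_derivative_sphere_mean[where F="\<lambda>\<xi> y. p y" and P="\<lambda>i \<xi> y. partial i p y", OF ball r])
       (auto simp: split_def intro: has_grad_p continuous_on_snd_comp continuous_on_partial_p continuous_on_p)
  define L where "L \<xi> y = (\<Sum>k\<in>UNIV. \<xi> $ k * (u y $ k - v $ k))" for \<xi> y :: "real^3"
  define DL where "DL i \<xi> y = (\<Sum>k\<in>UNIV. \<xi> $ k * partial i (\<lambda>z. u z $ k) y)" for i and \<xi> y :: "real^3"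
  have grad_L: "has_grad (L \<xi>) (\<lambda>i. DL i \<xi> y) y" if "y \<in> \<Omega>" for \<xi> y
    unfolding L_def DL_def
    by (rule has_grad_eq_rhs[OF has_grad_sum[OF has_grad_mult[OF has_grad_const
          has_grad_diff[OF has_grad_u[OF that] has_grad_const]]]]) simp
  have "has_grad (\<lambda>z. L \<xi> z * L \<xi> z) (\<lambda>i. 2 * L \<xi> y * DL i \<xi> y) y" if "y \<in> \<Omega>" for \<xi> y
    by (rule has_grad_eq_rhs[OF has_grad_mult[OF grad_L[OF that] grad_L[OF that]]]) simp
  moreover have cont_L: "continuous_on (UNIV \<times> \<Omega>) (\<lambda>w. L (fst w) (snd w))"
    unfolding L_def by (intro continuous_intros continuous_on_snd_comp continuous_on_u_component)
  moreover have "continuous_on (UNIV \<times> \<Omega>) (\<lambda>(\<xi>, y). 2 * L \<xi> y * DL i \<xi> y)" for i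
    unfolding DL_def split_def
    by (intro continuous_intros cont_L continuous_on_snd_comp continuous_on_partial_u)
  ultimately have deriv_quad: "((\<lambda>s. sphere_mean (\<lambda>\<xi>. L \<xi> (x + s *\<^sub>R \<xi>) * L \<xi> (x + s *\<^sub>R \<xi>))) has_real_derivative
      sphere_mean (\<lambda>\<xi>. \<Sum>i\<in>UNIV. \<xi> $ i * (2 * L \<xi> (x + r *\<^sub>R \<xi>) * DL i \<xi> (x + r *\<^sub>R \<xi>)))) (at r)"
    by (intro has_real_derivative_sphere_mean[OF ball r]) (auto simp: split_def intro: continuous_on_mult)
  have "(\<Sum>i\<in>UNIV. \<xi> $ i * partial i p y) = \<xi> \<bullet> gradient p y" for \<xi> y
    by (simp add: inner_vec_def gradient_def)
  moreover have "L \<xi> y * L \<xi> y = (\<xi> \<bullet> (u y - v))\<^sup>2" for \<xi> y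
    by (simp add: L_def inner_vec_def power2_eq_square)
  moreover have "(\<Sum>i\<in>UNIV. \<xi> $ i * (2 * L \<xi> y * DL i \<xi> y))
      = 2 * (\<xi> \<bullet> (u y - v)) * (\<xi> \<bullet> directional_deriv u \<xi> y)" for \<xi> y
    by (simp add: L_def DL_def inner_vec_def directional_deriv_def sum_3 algebra_simps)
  ultimately show ?thesis
    using DERIV_add[OF deriv_p deriv_quad] by simp
qed


lemma sphere_mean_transport_identity:
  assumes ball: "cball x R \<subseteq> \<Omega>" and r: "0 < r" "r < R"
  shows "r * (sphere_mean (\<lambda>\<xi>. \<xi> \<bullet> directional_deriv u (u (x + r *\<^sub>R \<xi>)) (x + r *\<^sub>R \<xi>))
             - sphere_mean (\<lambda>\<xi>. 2 * (\<xi> \<bullet> (u (x + r *\<^sub>R \<xi>) - v))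
                                   * (\<xi> \<bullet> directional_deriv u \<xi> (x + r *\<^sub>R \<xi>))))
       = sphere_mean (\<lambda>\<xi>. 3 * (\<xi> \<bullet> (u (x + r *\<^sub>R \<xi>) - v))\<^sup>2 - (norm (u (x + r *\<^sub>R \<xi>) - v))\<^sup>2)"
proof -
  have r_le: "\<bar>r\<bar> \<le> R" using r by simp
  define a where "a \<xi> = \<xi> \<bullet> directional_deriv u (u (x + r *\<^sub>R \<xi>)) (x + r *\<^sub>R \<xi>)" for \<xi>
  define q where "q \<xi> = 2 * (\<xi> \<bullet> (u (x + r *\<^sub>R \<xi>) - v)) * (\<xi> \<bullet> directional_deriv u \<xi> (x + r *\<^sub>R \<xi>))"
    for \<xi>
  define S where "S \<xi> = (\<xi> \<bullet> (u (x + r *\<^sub>R \<xi>) - v))\<^sup>2" for \<xi>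
  define N where "N \<xi> = (norm (u (x + r *\<^sub>R \<xi>) - v))\<^sup>2" for \<xi>
  have cont: "continuous_on (sphere 0 1) a" "continuous_on (sphere 0 1) q"
    "continuous_on (sphere 0 1) S" "continuous_on (sphere 0 1) N"
    unfolding a_def q_def S_def N_def directional_deriv_def inner_vec_def
    by (intro continuous_intros continuous_on_sphere_shift[OF _ ball r_le]
        continuous_on_u continuous_on_u_component continuous_on_partial_u)+
  have "continuous_on \<Omega> (transport_field_grad u x v k i)" for k i
    unfolding transport_field_grad_def[abs_def] inner_vec_def
    by (intro continuous_intros continuous_on_u continuous_on_u_component continuous_on_partial_u)
  with has_grad_transport_field[OF has_grad_u]
  have "r\<^sup>2 * sphere_mean (\<lambda>\<xi>. (\<Sum>k\<in>UNIV. transport_field_grad u x v k k (x + r *\<^sub>R \<xi>))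
        - (\<Sum>k\<in>UNIV. \<Sum>i\<in>UNIV. \<xi> $ k * \<xi> $ i * transport_field_grad u x v k i (x + r *\<^sub>R \<xi>)))
      = 2 * r * sphere_mean (\<lambda>\<xi>. \<Sum>k\<in>UNIV. \<xi> $ k * transport_field u x v k (x + r *\<^sub>R \<xi>))"
    by (intro sphere_mean_surface_divergence[OF ball r_le]) auto
  also have "sphere_mean (\<lambda>\<xi>. (\<Sum>k\<in>UNIV. transport_field_grad u x v k k (x + r *\<^sub>R \<xi>))
        - (\<Sum>k\<in>UNIV. \<Sum>i\<in>UNIV. \<xi> $ k * \<xi> $ i * transport_field_grad u x v k i (x + r *\<^sub>R \<xi>)))
      = sphere_mean (\<lambda>\<xi>. r * (a \<xi> - q \<xi>) + (N \<xi> - S \<xi>))"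
    unfolding a_def q_def S_def N_def
    by (intro sphere_mean_cong tangential_divergence_transport_field div_u sphere_shift_in[OF ball r_le])
  also have "\<dots> = r * (sphere_mean a - sphere_mean q) + (sphere_mean N - sphere_mean S)"
    using cont by (simp add: sphere_mean_add sphere_mean_diff sphere_mean_cmult continuous_intros)
  finally have "r\<^sup>2 * (r * (sphere_mean a - sphere_mean q) + (sphere_mean N - sphere_mean S))
      = r\<^sup>2 * (2 * sphere_mean S)"
    by (simp add: inner_transport_field S_def[abs_def] sphere_mean_cmult power2_eq_square)
  then have "r * (sphere_mean a - sphere_mean q) = 3 * sphere_mean S - sphere_mean N"
    using r by simp
  also have "\<dots> = sphere_mean (\<lambda>\<xi>. 3 * S \<xi> - N \<xi>)"
    using cont by (simp add: sphere_mean_diff sphere_mean_cmult continuous_intros)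
  finally show ?thesis
    unfolding a_def[abs_def] q_def[abs_def] S_def[abs_def] N_def[abs_def] .
qed

lemma sphere_avg_eq_sphere_mean_shifted:
  assumes ball: "cball x R \<subseteq> \<Omega>" and s: "\<bar>s\<bar> \<le> R"
  shows "sphere_avg (\<lambda>\<xi>. p (x + s *\<^sub>R \<xi>)) = sphere_mean (\<lambda>\<xi>. p (x + s *\<^sub>R \<xi>))"
    and "sphere_avg (\<lambda>\<xi>. (\<xi> \<bullet> (u (x + s *\<^sub>R \<xi>) - v))\<^sup>2)
       = sphere_mean (\<lambda>\<xi>. (\<xi> \<bullet> (u (x + s *\<^sub>R \<xi>) - v))\<^sup>2)"
    and "sphere_avg (\<lambda>\<xi>. 3 * (\<xi> \<bullet> (u (x + s *\<^sub>R \<xi>) - v))\<^sup>2 - (norm (u (x + s *\<^sub>R \<xi>) - v))\<^sup>2)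
       = sphere_mean (\<lambda>\<xi>. 3 * (\<xi> \<bullet> (u (x + s *\<^sub>R \<xi>) - v))\<^sup>2 - (norm (u (x + s *\<^sub>R \<xi>) - v))\<^sup>2)"
  by (intro sphere_avg_eq_sphere_mean continuous_intros continuous_on_sphere_shift[OF _ ball s]
      continuous_on_p continuous_on_u)+

end

lemma cball_subset_if_lt_infdist_frontier:
  fixes \<Omega> :: "(real^3) set"
  assumes "x \<in> \<Omega>" "0 < r" "frontier \<Omega> = {} \<or> r < infdist x (frontier \<Omega>)"
  obtains R where "r < R" "cball x R \<subseteq> \<Omega>"
proof -
  define R where "R = (if frontier \<Omega> = {} then r + 1 else (r + infdist x (frontier \<Omega>)) / 2)"
  have "r < R" using assms(3) by (auto simp: R_def)
  have far: "R < dist x w" if "w \<in> frontier \<Omega>" for w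
    using assms(3) infdist_le[OF that, of x] that by (auto simp: R_def)
  have "cball x R \<subseteq> \<Omega>"
  proof (rule ccontr)
    assume "\<not> cball x R \<subseteq> \<Omega>"
    then have "cball x R - \<Omega> \<noteq> {}" by auto
    moreover have "x \<in> cball x R \<inter> \<Omega>" using assms(1,2) \<open>r < R\<close> by auto
    then have "cball x R \<inter> \<Omega> \<noteq> {}" by blast
    ultimately have "cball x R \<inter> frontier \<Omega> \<noteq> {}"
      by (metis connected_Int_frontier connected_cball)
    with far show False by force
  qed
  with \<open>r < R\<close> that show ?thesis by blast
qed

theorem lemma1:
  fixes \<Omega> :: "(real^3) set" and x v :: "real^3" and r :: real
    and u :: "real^3 \<Rightarrow> real^3" and p :: "real^3 \<Rightarrow> real"
  assumes "open \<Omega>" and "x \<in> \<Omega>" and "0 < r"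
    and "frontier \<Omega> = {} \<or> r < infdist x (frontier \<Omega>)"
    and "\<forall>k. C2_on \<Omega> (\<lambda>y. u y $ k)"
    and "\<forall>y\<in>\<Omega>. (\<Sum>i\<in>UNIV. partial i (\<lambda>z. u z $ i) y) = 0"
    and "C2_on \<Omega> p"
    and "\<forall>y\<in>\<Omega>. - laplacian p y =
           (\<Sum>i\<in>UNIV. \<Sum>j\<in>UNIV. partial i (partial j (\<lambda>z. u z $ i * u z $ j)) y)"
  shows "((\<lambda>s. sphere_avg (\<lambda>\<xi>. p (x + s *\<^sub>R \<xi>))
              + sphere_avg (\<lambda>\<xi>. (\<xi> \<bullet> (u (x + s *\<^sub>R \<xi>) - v))\<^sup>2))
          has_real_derivative
           (- (1 / r) * sphere_avg (\<lambda>\<xi>. 3 * (\<xi> \<bullet> (u (x + r *\<^sub>R \<xi>) - v))\<^sup>2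
                                     - (norm (u (x + r *\<^sub>R \<xi>) - v))\<^sup>2))) (at r)"
proof -
  obtain R where "r < R" and ball: "cball x R \<subseteq> \<Omega>"
    using cball_subset_if_lt_infdist_frontier[OF assms(2-4)] .
  interpret pressure_poisson \<Omega> u p
    using assms(1,5-8) by unfold_locales auto
  have r: "0 < r" "r < R" "\<bar>r\<bar> < R" using \<open>0 < r\<close> \<open>r < R\<close> by auto
  have combine: "\<And>g b q t. g = - b \<Longrightarrow> r * (b - q) = t \<Longrightarrow> g + q = - (1 / r) * t"
    using r by (auto simp: field_simps)
  have "((\<lambda>s. sphere_mean (\<lambda>\<xi>. p (x + s *\<^sub>R \<xi>)) + sphere_mean (\<lambda>\<xi>. (\<xi> \<bullet> (u (x + s *\<^sub>R \<xi>) - v))\<^sup>2))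
      has_real_derivative (- (1 / r) * sphere_avg (\<lambda>\<xi>. 3 * (\<xi> \<bullet> (u (x + r *\<^sub>R \<xi>) - v))\<^sup>2
                                     - (norm (u (x + r *\<^sub>R \<xi>) - v))\<^sup>2))) (at r)"
    using has_real_derivative_sphere_means[OF ball r(3), of v]
    unfolding sphere_avg_eq_sphere_mean_shifted(3)[OF ball less_imp_le[OF r(3)]]
      combine[OF sphere_mean_pressure_flux[OF ball r(1,2)] sphere_mean_transport_identity[OF ball r(1,2)]] .
  then show ?thesis
    by (rule has_field_derivative_transform_within_open[OF _ open_greaterThanLessThan[of "-R" R]])
       (use r in \<open>auto simp: sphere_avg_eq_sphere_mean_shifted[OF ball]\<close>)
qed

end
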